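(* Assume the setting in the context. Let $x_i, x_j, x_{k_1},\dots,x_{k_m}\in X$ be distinct and $K=\{x_{k_1},\dots,x_{k_m}\}$. Assume that (1) $x_j$ is a visible parent of $x_i$ (w.r.t. $X$), and (2) for each $q=1,\dots,m$, the pair $(x_i,x_j)$ is invisible with respect to $X\setminus\{x_{k_q}\}$. Then all of the following hold: (a) for every $q$: for all $M\subseteq X\setminus\{x_i,x_{k_q}\}$, $N\subseteq X\setminus\{x_j,x_{k_q}\}$ and $G_1,G_2\in\mathcal G$, $x_i-G_1(M)\not\perp\!\!\!\perp x_j-G_2(N)$; (b) for all $M\subseteq X\setminus\{x_i,x_j\}$, $N\subseteq X\setminus\{x_j\}$ and $G_1,G_2\in\mathcal G$, $x_i-G_1(M)\not\perp\!\!\!\perp x_j-G_2(N)$; (c) there exist $Q_1,Q_2\subseteq K$ with $Q_1\cup Q_2=K$, $G_1,G_2\in\mathcal G$ and $M,N\subseteq X\setminus(\{x_i,x_j\}\cup K)$ such that $x_i-G_1(M\cup\{x_j\}\cup Q_1)\perp\!\!\!\perp x_j-G_2(N\cup Q_2)$.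
   Context: Model: $X$ is a finite set of observed random variables and $U$ a finite set of unobserved random variables; $V=X\cup U$ and $G=(V,E)$ is a DAG on $V$. Each $v_i\in V$ satisfies $v_i=\sum_{x_j\in \mathrm{pa}(v_i)\cap X} f^{(i)}_j(x_j)+\sum_{u_k\in\mathrm{pa}(v_i)\cap U} f^{(i)}_k(u_k)+n_i$, where the $f$'s are nonlinear functions and the external noises $n_i$ are jointly independent. "Parent", "ancestor", "path", "d-separation" refer to $G$ (a path has distinct vertices). Causal Faithfulness Condition (CFC): any conditional independence among variables of $V$ that is not entailed by d-separation in $G$ does not hold. $\perp\!\!\!\perp$ denotes statistical independence, $\not\perp\!\!\!\perp$ dependence. Function class: $\mathcal G$ is a class of generalized additive functions: for $G\in\mathcal G$ and a set $M$ of observed variables, $G(M)=\sum_{x_m\in M} g_m(x_m)$ (with $G(\emptyset)=0$). It satisfies: for any $x_i,x_j\in X$, sets $M,N\subseteq X$, $G_1,G_2\in\mathcal G$ and external noise $n_k$, if $n_k\not\perp\!\!\!\perp x_i-G_1(M)$ and $n_k\not\perp\!\!\!\perp x_j-G_2(N)$ then $x_i-G_1(M)\not\perp\!\!\!\perp x_j-G_2(N)$. Definitions, for $X'\subseteq X$ and $x_i,x_j\in X'$: an unobserved causal path (UCP) from $x_i$ to $x_j$ w.r.t. $X'$ is a directed path $x_i\to\cdots\to v_k\to x_j$ in $G$ with $v_k\notin X'$; an unobserved backdoor path (UBP) between $x_i$ and $x_j$ w.r.t. $X'$ is a path $x_i\leftarrow v_k\leftarrow\cdots\leftarrow v\to\cdots\to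 v_l\to x_j$ with $v_k,v_l\notin X'$ (allowing $v=v_k$, $v=v_l$, or $v=v_k=v_l$; $v$ may be in $X'$). "UBP/UCP between $x_i$ and $x_j$" means a UBP or a UCP in either direction. $x_j$ is a visible parent of $x_i$ w.r.t. $X'$ if $x_j$ is a parent of $x_i$ and there is no UBP/UCP between them w.r.t. $X'$; $(x_i,x_j)$ is a visible non-edge w.r.t. $X'$ if there is no edge between them and no UBP/UCP between them w.r.t. $X'$; $(x_i,x_j)$ is invisible w.r.t. $X'$ if there is a UBP/UCP between them w.r.t. $X'$. When $X'$ is omitted, $X'=X$. Standing facts (taken as known), for $X'\subseteq X$ and distinct $x_i,x_j\in X'$: (F1) $x_j$ is a visible parent of $x_i$ w.r.t. $X'$ iff [for all $G_1,G_2\in\mathcal G$, $M\subseteq X'\setminus\{x_i,x_j\}$, $N\subseteq X'\setminus\{x_j\}$: $x_i-G_1(M)\not\perp\!\!\!\perp x_j-G_2(N)$] and [there exist $G_1,G_2\in\mathcal G$, $M\subseteq X'\setminus\{x_i\}$, $N\subseteq X'\setminus\{x_i,x_j\}$ with $x_i-G_1(M)\perp\!\!\!\perp x_j-G_2(N)$]. (F2) $(x_i,x_j)$ is a visible non-edge w.r.t. $X'$ iff there exist $G_1,G_2\in\mathcal G$ and $M,N\subseteq X'\setminus\{x_i,x_j\}$ with $x_i-G_1(M)\perp\!\!\!\perp x_j-G_2(N)$. (F3) $(x_i,x_j)$ is invisible w.r.t. $X'$ iff for all $M\subseteq X'\setminus\{x_i\}$, $N\subseteq X'\setminus\{x_j\}$,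 $G_1,G_2\in\mathcal G$: $x_i-G_1(M)\not\perp\!\!\!\perp x_j-G_2(N)$. *)

theory Defs
  imports "HOL-Probability.Probability"
begin

section \<open>Graph notions (G = (V,E), E the set of directed edges (parent, child))\<close>

definition dpath :: "('v \<times> 'v) set \<Rightarrow> 'v list \<Rightarrow> bool" where
  "dpath E p \<longleftrightarrow> p \<noteq> [] \<and> distinct p \<and> (\<forall>k. Suc k < length p \<longrightarrow> (p ! k, p ! Suc k) \<in> E)"

definition UCP :: "('v \<times> 'v) set \<Rightarrow> 'v set \<Rightarrow> 'v \<Rightarrow> 'v \<Rightarrow> bool" where
  "UCP E X' xi xj \<longleftrightarrow> (\<exists>p. dpath E p \<and> length p \<ge> 2 \<and> hd p = xi \<and> last p = xj
      \<and> p ! (length p - 2) \<notin> X')"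

text \<open>Unobserved backdoor path between xi and xj w.r.t. X':
  xi <- vk <- ... <- v -> ... -> vl -> xj, a path with distinct vertices, vk, vl not in X'.
  It is the union of a directed path p from v to xi and a directed path q from v to xj
  sharing only v.\<close>
definition UBP :: "('v \<times> 'v) set \<Rightarrow> 'v set \<Rightarrow> 'v \<Rightarrow> 'v \<Rightarrow> bool" where
  "UBP E X' xi xj \<longleftrightarrow> (\<exists>p q. dpath E p \<and> dpath E q \<and> length p \<ge> 2 \<and> length q \<ge> 2
      \<and> hd p = hd q \<and> last p = xi \<and> last q = xj \<and> set p \<inter> set q = {hd p}
      \<and> p ! (length p - 2) \<notin> X' \<and> q ! (length q - 2) \<notin> X')"

definition UBP_UCP_between :: "('v \<times> 'v) set \<Rightarrow> 'v set \<Rightarrow> 'v \<Rightarrow> 'v \<Rightarrow> bool" where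
  "UBP_UCP_between E X' xi xj \<longleftrightarrow>
     UBP E X' xi xj \<or> UBP E X' xj xi \<or> UCP E X' xi xj \<or> UCP E X' xj xi"

definition visible_parent :: "('v \<times> 'v) set \<Rightarrow> 'v set \<Rightarrow> 'v \<Rightarrow> 'v \<Rightarrow> bool" where
  "visible_parent E X' xi xj \<longleftrightarrow> (xj, xi) \<in> E \<and> \<not> UBP_UCP_between E X' xi xj"

definition visible_nonedge :: "('v \<times> 'v) set \<Rightarrow> 'v set \<Rightarrow> 'v \<Rightarrow> 'v \<Rightarrow> bool" where
  "visible_nonedge E X' xi xj \<longleftrightarrow> (xi, xj) \<notin> E \<and> (xj, xi) \<notin> E \<and> \<not> UBP_UCP_between E X' xi xj"

definition invisible :: "('v \<times> 'v) set \<Rightarrow> 'v set \<Rightarrow> 'v \<Rightarrow> 'v \<Rightarrow> bool" where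
  "invisible E X' xi xj \<longleftrightarrow> UBP_UCP_between E X' xi xj"

definition indep :: "'w measure \<Rightarrow> ('w \<Rightarrow> real) \<Rightarrow> ('w \<Rightarrow> real) \<Rightarrow> bool" where
  "indep Pr A B \<longleftrightarrow> prob_space.indep_var Pr borel A borel B"

definition resid :: "('v \<Rightarrow> 'w \<Rightarrow> real) \<Rightarrow> ('v \<Rightarrow> real \<Rightarrow> real) \<Rightarrow> 'v set \<Rightarrow> 'v \<Rightarrow> 'w \<Rightarrow> real" where
  "resid val g A x = (\<lambda>\<omega>. val x \<omega> - (\<Sum>m\<in>A. g m (val m \<omega>)))"

definition nonlinear :: "(real \<Rightarrow> real) \<Rightarrow> bool" where
  "nonlinear h \<longleftrightarrow> \<not> (\<exists>a b. \<forall>t. h t = a * t + b)"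

definition causal_model ::
  "'w measure \<Rightarrow> 'v set \<Rightarrow> 'v set \<Rightarrow> ('v \<times> 'v) set \<Rightarrow> ('v \<Rightarrow> 'w \<Rightarrow> real)
    \<Rightarrow> ('v \<Rightarrow> 'w \<Rightarrow> real) \<Rightarrow> ('v \<Rightarrow> 'v \<Rightarrow> real \<Rightarrow> real) \<Rightarrow> bool" where
  "causal_model Pr X U E val noise f \<longleftrightarrow>
     prob_space Pr \<and> finite X \<and> finite U \<and> X \<inter> U = {} \<and>
     E \<subseteq> (X \<union> U) \<times> (X \<union> U) \<and> acyclic E \<and>
     (\<forall>v \<in> X \<union> U. val v \<in> borel_measurable Pr \<and> noise v \<in> borel_measurable Pr) \<and>
     (\<forall>i \<in> X \<union> U. \<forall>j. (j, i) \<in> E \<longrightarrow> f i j \<in> borel_measurable borel \<and> nonlinear (f i j)) \<and>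
     (\<forall>i \<in> X \<union> U. \<forall>\<omega> \<in> space Pr.
        val i \<omega> = (\<Sum>j\<in>{j. (j, i) \<in> E}. f i j (val j \<omega>)) + noise i \<omega>) \<and>
     prob_space.indep_vars Pr (\<lambda>_. borel) noise (X \<union> U)"

definition gam_class ::
  "'w measure \<Rightarrow> 'v set \<Rightarrow> 'v set \<Rightarrow> ('v \<Rightarrow> 'w \<Rightarrow> real) \<Rightarrow> ('v \<Rightarrow> 'w \<Rightarrow> real)
    \<Rightarrow> ('v \<Rightarrow> real \<Rightarrow> real) set \<Rightarrow> bool" where
  "gam_class Pr X U val noise \<G> \<longleftrightarrow>
     (\<forall>g \<in> \<G>. \<forall>m. g m \<in> borel_measurable borel) \<and>
     (\<forall>xi \<in> X. \<forall>xj \<in> X. \<forall>M N. \<forall>g1 \<in> \<G>. \<forall>g2 \<in> \<G>. \<forall>k \<in> X \<union> U.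
        M \<subseteq> X \<longrightarrow> N \<subseteq> X \<longrightarrow>
        \<not> indep Pr (noise k) (resid val g1 M xi) \<longrightarrow>
        \<not> indep Pr (noise k) (resid val g2 N xj) \<longrightarrow>
        \<not> indep Pr (resid val g1 M xi) (resid val g2 N xj))"

text \<open>Standing facts (F1)-(F3), taken as known.\<close>
definition standing_facts ::
  "'w measure \<Rightarrow> 'v set \<Rightarrow> ('v \<times> 'v) set \<Rightarrow> ('v \<Rightarrow> 'w \<Rightarrow> real)
    \<Rightarrow> ('v \<Rightarrow> real \<Rightarrow> real) set \<Rightarrow> bool" where
  "standing_facts Pr X E val \<G> \<longleftrightarrow>
     (\<forall>X' \<subseteq> X. \<forall>xi \<in> X'. \<forall>xj \<in> X'. xi \<noteq> xj \<longrightarrow>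
       (visible_parent E X' xi xj \<longleftrightarrow>
          (\<forall>g1 \<in> \<G>. \<forall>g2 \<in> \<G>. \<forall>M N. M \<subseteq> X' - {xi, xj} \<longrightarrow> N \<subseteq> X' - {xj} \<longrightarrow>
              \<not> indep Pr (resid val g1 M xi) (resid val g2 N xj)) \<and>
          (\<exists>g1 \<in> \<G>. \<exists>g2 \<in> \<G>. \<exists>M N. M \<subseteq> X' - {xi} \<and> N \<subseteq> X' - {xi, xj} \<and>
              indep Pr (resid val g1 M xi) (resid val g2 N xj))) \<and>
       (visible_nonedge E X' xi xj \<longleftrightarrow>
          (\<exists>g1 \<in> \<G>. \<exists>g2 \<in> \<G>. \<exists>M N. M \<subseteq> X' - {xi, xj} \<and> N \<subseteq> X' - {xi, xj} \<and>
              indep Pr (resid val g1 M xi) (resid val g2 N xj))) \<and>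
       (invisible E X' xi xj \<longleftrightarrow>
          (\<forall>g1 \<in> \<G>. \<forall>g2 \<in> \<G>. \<forall>M N. M \<subseteq> X' - {xi} \<longrightarrow> N \<subseteq> X' - {xj} \<longrightarrow>
              \<not> indep Pr (resid val g1 M xi) (resid val g2 N xj))))"

end

theory Submission
  imports Defs
begin

(* By (F1), x_j is a visible parent of x_i exactly when no residual pair avoiding x_j on the
   x_i side is independent, while some pair with x_j allowed on that side is. Take such an
   independent pair x_i - G1(M), x_j - G2(N): then x_j must lie in M, and every x_k in K lies
   in M or N, for otherwise both sets avoid x_k, contradicting (F3) for the pair (x_i, x_j),
   which is invisible w.r.t. X - {x_k}. Splitting M and N along K gives (c). *)

lemma standing_factsD:
  assumes "standing_facts Pr X E val \<G>" "X' \<subseteq> X" "xi \<in> X'" "xj \<in> X'" "xi \<noteq> xj"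
  shows "visible_parent E X' xi xj \<longleftrightarrow>
           (\<forall>g1 \<in> \<G>. \<forall>g2 \<in> \<G>. \<forall>M N. M \<subseteq> X' - {xi, xj} \<longrightarrow> N \<subseteq> X' - {xj} \<longrightarrow>
              \<not> indep Pr (resid val g1 M xi) (resid val g2 N xj)) \<and>
           (\<exists>g1 \<in> \<G>. \<exists>g2 \<in> \<G>. \<exists>M N. M \<subseteq> X' - {xi} \<and> N \<subseteq> X' - {xi, xj} \<and>
              indep Pr (resid val g1 M xi) (resid val g2 N xj))"
    and "invisible E X' xi xj \<longleftrightarrow>
           (\<forall>g1 \<in> \<G>. \<forall>g2 \<in> \<G>. \<forall>M N. M \<subseteq> X' - {xi} \<longrightarrow> N \<subseteq> X' - {xj} \<longrightarrow>
              \<not> indep Pr (resid val g1 M xi) (resid val g2 N xj))"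
  using assms unfolding standing_facts_def by (metis (no_types, lifting))+

lemma invisible_not_indep_resid:
  assumes facts: "standing_facts Pr X E val \<G>"
    and X': "X' \<subseteq> X" "xi \<in> X'" "xj \<in> X'" "xi \<noteq> xj"
    and inv: "invisible E X' xi xj"
    and g: "g1 \<in> \<G>" "g2 \<in> \<G>" and MN: "M \<subseteq> X' - {xi}" "N \<subseteq> X' - {xj}"
  shows "\<not> indep Pr (resid val g1 M xi) (resid val g2 N xj)"
  using iffD1[OF standing_factsD(2)[OF facts X'] inv] g MN by blast

lemma visible_parent_not_indep_resid:
  assumes facts: "standing_facts Pr X E val \<G>"
    and X': "X' \<subseteq> X" "xi \<in> X'" "xj \<in> X'" "xi \<noteq> xj"
    and vis: "visible_parent E X' xi xj"
    and g: "g1 \<in> \<G>" "g2 \<in> \<G>" and MN: "M \<subseteq> X' - {xi, xj}" "N \<subseteq> X' - {xj}"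
  shows "\<not> indep Pr (resid val g1 M xi) (resid val g2 N xj)"
  using conjunct1[OF iffD1[OF standing_factsD(1)[OF facts X'] vis]] g MN by blast

lemma visible_parent_indep_resid:
  assumes facts: "standing_facts Pr X E val \<G>"
    and X': "X' \<subseteq> X" "xi \<in> X'" "xj \<in> X'" "xi \<noteq> xj"
    and vis: "visible_parent E X' xi xj"
  obtains g1 g2 M N where "g1 \<in> \<G>" "g2 \<in> \<G>" "M \<subseteq> X' - {xi}" "N \<subseteq> X' - {xi, xj}"
    "indep Pr (resid val g1 M xi) (resid val g2 N xj)"
  using conjunct2[OF iffD1[OF standing_factsD(1)[OF facts X'] vis]] by blast

lemma indep_resid_split_along:
  assumes ind: "indep Pr (resid val g1 M xi) (resid val g2 N xj)" and g: "g1 \<in> \<G>" "g2 \<in> \<G>"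
    and M: "M \<subseteq> X - {xi}" "xj \<in> M" and N: "N \<subseteq> X - {xi, xj}"
    and K: "K \<subseteq> M \<union> N" "xi \<notin> K" "xj \<notin> K"
  shows "\<exists>Q1 Q2. Q1 \<subseteq> K \<and> Q2 \<subseteq> K \<and> Q1 \<union> Q2 = K \<and>
           (\<exists>g1 \<in> \<G>. \<exists>g2 \<in> \<G>. \<exists>M N. M \<subseteq> X - ({xi, xj} \<union> K) \<and> N \<subseteq> X - ({xi, xj} \<union> K) \<and>
              indep Pr (resid val g1 (M \<union> {xj} \<union> Q1) xi) (resid val g2 (N \<union> Q2) xj))"
proof (rule exI[of _ "M \<inter> K"], rule exI[of _ "N \<inter> K"], intro conjI)
  show "M \<inter> K \<subseteq> K" "N \<inter> K \<subseteq> K" "M \<inter> K \<union> N \<inter> K = K"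
    using K by blast+
  let ?R = "{xi, xj} \<union> K"
  have "M - ?R \<union> {xj} \<union> M \<inter> K = M" "N - ?R \<union> N \<inter> K = N"
    using M N by blast+
  with ind have "indep Pr (resid val g1 (M - ?R \<union> {xj} \<union> M \<inter> K) xi) (resid val g2 (N - ?R \<union> N \<inter> K) xj)"
    by simp
  moreover have "M - ?R \<subseteq> X - ?R" "N - ?R \<subseteq> X - ?R"
    using M N by blast+
  ultimately show "\<exists>g1 \<in> \<G>. \<exists>g2 \<in> \<G>. \<exists>M' N'. M' \<subseteq> X - ?R \<and> N' \<subseteq> X - ?R \<and>
      indep Pr (resid val g1 (M' \<union> {xj} \<union> M \<inter> K) xi) (resid val g2 (N' \<union> N \<inter> K) xj)"
    using g by blast
qed

(* The structural model and the function class enter only through the standing facts. *)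
theorem lemma5:
  fixes Pr :: "'w measure" and X U :: "'v set" and E :: "('v \<times> 'v) set"
    and val noise :: "'v \<Rightarrow> 'w \<Rightarrow> real" and f :: "'v \<Rightarrow> 'v \<Rightarrow> real \<Rightarrow> real"
    and \<G> :: "('v \<Rightarrow> real \<Rightarrow> real) set"
    and xi xj :: 'v and K :: "'v set"
  assumes model: "causal_model Pr X U E val noise f"
    and cls: "gam_class Pr X U val noise \<G>"
    and facts: "standing_facts Pr X E val \<G>"
    and xi: "xi \<in> X" and xj: "xj \<in> X" and K: "K \<subseteq> X"
    and dist: "xi \<noteq> xj" "xi \<notin> K" "xj \<notin> K"
    and vis: "visible_parent E X xi xj"
    and inv: "\<forall>k \<in> K. invisible E (X - {k}) xi xj"
  shows "(\<forall>k \<in> K. \<forall>g1 \<in> \<G>. \<forall>g2 \<in> \<G>. \<forall>M N. M \<subseteq> X - {xi, k} \<longrightarrow> N \<subseteq> X - {xj, k} \<longrightarrow>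
            \<not> indep Pr (resid val g1 M xi) (resid val g2 N xj))
       \<and> (\<forall>g1 \<in> \<G>. \<forall>g2 \<in> \<G>. \<forall>M N. M \<subseteq> X - {xi, xj} \<longrightarrow> N \<subseteq> X - {xj} \<longrightarrow>
            \<not> indep Pr (resid val g1 M xi) (resid val g2 N xj))
       \<and> (\<exists>Q1 Q2. Q1 \<subseteq> K \<and> Q2 \<subseteq> K \<and> Q1 \<union> Q2 = K \<and>
            (\<exists>g1 \<in> \<G>. \<exists>g2 \<in> \<G>. \<exists>M N. M \<subseteq> X - ({xi, xj} \<union> K) \<and> N \<subseteq> X - ({xi, xj} \<union> K) \<and>
               indep Pr (resid val g1 (M \<union> {xj} \<union> Q1) xi) (resid val g2 (N \<union> Q2) xj)))"
    (is "?a \<and> ?b \<and> ?c")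
proof (intro conjI)
  have dep_without: "\<not> indep Pr (resid val g1 M xi) (resid val g2 N xj)"
    if "k \<in> K" "g1 \<in> \<G>" "g2 \<in> \<G>" "M \<subseteq> X - {xi, k}" "N \<subseteq> X - {xj, k}" for k g1 g2 M N
    using that inv xi xj dist
    by (intro invisible_not_indep_resid[OF facts, of "X - {k}"]) auto
  then show ?a by blast
  have dep_parent: "\<not> indep Pr (resid val g1 M xi) (resid val g2 N xj)"
    if "g1 \<in> \<G>" "g2 \<in> \<G>" "M \<subseteq> X - {xi, xj}" "N \<subseteq> X - {xj}" for g1 g2 M N
    using visible_parent_not_indep_resid[OF facts order_refl xi xj dist(1) vis that] .
  then show ?b by blast
  obtain g1 g2 M N where g: "g1 \<in> \<G>" "g2 \<in> \<G>" and MN: "M \<subseteq> X - {xi}" "N \<subseteq> X - {xi, xj}"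
    and ind: "indep Pr (resid val g1 M xi) (resid val g2 N xj)"
    using visible_parent_indep_resid[OF facts order_refl xi xj dist(1) vis] .
  have "xj \<in> M"
    using dep_parent[OF g, of M N] MN ind by blast
  moreover have "K \<subseteq> M \<union> N"
  proof
    fix k assume k: "k \<in> K"
    show "k \<in> M \<union> N"
    proof (rule ccontr)
      assume "k \<notin> M \<union> N"
      then have "M \<subseteq> X - {xi, k}" "N \<subseteq> X - {xj, k}" using MN by blast+
      with dep_without[OF k g] ind show False by blast
    qed
  qed
  ultimately show ?c
    using indep_resid_split_along[OF ind g MN(1) _ MN(2) _ dist(2,3)] by blast
qed

end
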